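(* Let $P$ be a 6-stack and let $Q\subseteq P$ be a subset which, with the induced order, is isomorphic to a tower of sections. If $j\ge 0$ is an integer with $\#Q(j)=3$, where $Q(j)$ denotes the set of elements of rank $j$ in the poset $Q$, then $Q(j)=P(i)$ for some integer $i\ge 0$.
   Context: All posets are finite. For a poset $P$ and $p\in P$, the rank $r(p)$ of $p$ is the largest $m$ such that there is a chain $p_0<\dots<p_m=p$ in $P$. $P$ is ranked of rank $r(P)$ if every maximal chain has exactly $r(P)+1$ elements. For $0\le i\le j$, $P(i,j)=\{p\in P:i\le r(p)\le j\}$, $P(i)=P(i,i)$ (induced order). The 6-crown $C_6$ is the poset on $\{x_0,x_1,x_2,y_0,y_1,y_2\}$ whose only strict comparabilities are $x_0<y_0>x_1<y_1>x_2<y_2>x_0$. A 6-stack is a ranked poset $P$ of rank $n\ge1$ such that $P(i,i+1)\cong C_6$ for each $0\le i<n$. The ordinal sum of posets $P_1,\dots,P_k$ ($k\ge1$) is their disjoint union ordered by the orders of the $P_i$ together with $p<q$ whenever $p\in P_i,q\in P_j,i<j$. A section is either a two-element antichain or a poset on the set $\{[i,k]: 0\le i\le 2,\ 0\le k\le n\}$ (with $3(n+1)$ distinct elements), for some $n\ge 1$, such that: (1) $[i,k]<[i,l]$ whenever $0\le k<l\le n$; (2) for each $k$, $\{[0,k],[1,k],[2,k]\}$ is an antichain; (3) $[i,k]<[j,l]$ implies $[i+1,k]<[j+1,l]$ (first indices mod $3$); (4) for each $0\le k<n$ there are $i,j$ with $[i,k]\not<[j,k+1]$. A tower of sections is an ordinal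 sum of one or more sections. *)

theory Defs
  imports Main
begin

text \<open>A finite poset is a finite carrier A together with a strict order lt on A.
  All notions below refer to the order induced on the given carrier.\<close>

definition poset :: "'a set \<Rightarrow> ('a \<Rightarrow> 'a \<Rightarrow> bool) \<Rightarrow> bool" where
  "poset A lt \<longleftrightarrow> finite A \<and> (\<forall>x\<in>A. \<not> lt x x) \<and>
     (\<forall>x\<in>A. \<forall>y\<in>A. \<forall>z\<in>A. lt x y \<and> lt y z \<longrightarrow> lt x z)"

definition order_iso :: "'a set \<Rightarrow> ('a \<Rightarrow> 'a \<Rightarrow> bool) \<Rightarrow> 'b set \<Rightarrow> ('b \<Rightarrow> 'b \<Rightarrow> bool) \<Rightarrow> bool" where
  "order_iso A la B lb \<longleftrightarrow> (\<exists>f. bij_betw f A B \<and> (\<forall>x\<in>A. \<forall>y\<in>A. la x y \<longleftrightarrow> lb (f x) (f y)))"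

definition chain_to :: "'a set \<Rightarrow> ('a \<Rightarrow> 'a \<Rightarrow> bool) \<Rightarrow> 'a list \<Rightarrow> 'a \<Rightarrow> bool" where
  "chain_to A lt cs p \<longleftrightarrow> cs \<noteq> [] \<and> set cs \<subseteq> A \<and> sorted_wrt lt cs \<and> last cs = p"

definition rank :: "'a set \<Rightarrow> ('a \<Rightarrow> 'a \<Rightarrow> bool) \<Rightarrow> 'a \<Rightarrow> nat" where
  "rank A lt p = (GREATEST m. \<exists>cs. chain_to A lt cs p \<and> length cs = m + 1)"

definition levels :: "'a set \<Rightarrow> ('a \<Rightarrow> 'a \<Rightarrow> bool) \<Rightarrow> nat \<Rightarrow> nat \<Rightarrow> 'a set" where
  "levels A lt i j = {p \<in> A. i \<le> rank A lt p \<and> rank A lt p \<le> j}"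

definition level :: "'a set \<Rightarrow> ('a \<Rightarrow> 'a \<Rightarrow> bool) \<Rightarrow> nat \<Rightarrow> 'a set" where
  "level A lt i = {p \<in> A. rank A lt p = i}"

definition is_chain :: "'a set \<Rightarrow> ('a \<Rightarrow> 'a \<Rightarrow> bool) \<Rightarrow> 'a set \<Rightarrow> bool" where
  "is_chain A lt C \<longleftrightarrow> C \<subseteq> A \<and> (\<forall>x\<in>C. \<forall>y\<in>C. x \<noteq> y \<longrightarrow> lt x y \<or> lt y x)"

definition maximal_chain :: "'a set \<Rightarrow> ('a \<Rightarrow> 'a \<Rightarrow> bool) \<Rightarrow> 'a set \<Rightarrow> bool" where
  "maximal_chain A lt C \<longleftrightarrow> is_chain A lt C \<and> (\<forall>D. is_chain A lt D \<and> C \<subseteq> D \<longrightarrow> D = C)"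

definition ranked_of_rank :: "'a set \<Rightarrow> ('a \<Rightarrow> 'a \<Rightarrow> bool) \<Rightarrow> nat \<Rightarrow> bool" where
  "ranked_of_rank A lt n \<longleftrightarrow> (\<forall>C. maximal_chain A lt C \<longrightarrow> card C = n + 1)"

text \<open>The 6-crown on {0..5}: x_k = k, y_k = 3 + k;
  x0<y0>x1<y1>x2<y2>x0.\<close>
definition crown6_less :: "nat \<Rightarrow> nat \<Rightarrow> bool" where
  "crown6_less a b \<longleftrightarrow> (a, b) \<in> {(0,3), (1,3), (1,4), (2,4), (2,5), (0,5)}"

definition six_stack :: "'a set \<Rightarrow> ('a \<Rightarrow> 'a \<Rightarrow> bool) \<Rightarrow> bool" where
  "six_stack A lt \<longleftrightarrow> poset A lt \<and>
     (\<exists>n\<ge>1. ranked_of_rank A lt n \<and>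
        (\<forall>i<n. order_iso (levels A lt i (i + 1)) lt {0..5::nat} crown6_less))"

text \<open>A section (up to isomorphism): a two-element antichain, or a poset whose
  elements are enumerated bijectively as [i,k] = f (i,k), i<3, k\<le>n, satisfying (1)-(4).\<close>
definition is_section :: "'a set \<Rightarrow> ('a \<Rightarrow> 'a \<Rightarrow> bool) \<Rightarrow> bool" where
  "is_section S lt \<longleftrightarrow> poset S lt \<and>
    ((card S = 2 \<and> (\<forall>x\<in>S. \<forall>y\<in>S. \<not> lt x y)) \<or>
     (\<exists>n\<ge>1. \<exists>f :: nat \<times> nat \<Rightarrow> 'a. bij_betw f ({0..<3} \<times> {0..n}) S \<and>
        (\<forall>i<3. \<forall>k l. k < l \<and> l \<le> n \<longrightarrow> lt (f (i, k)) (f (i, l))) \<and>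
        (\<forall>k\<le>n. \<forall>i<3. \<forall>j<3. \<not> lt (f (i, k)) (f (j, k))) \<and>
        (\<forall>i<3. \<forall>j<3. \<forall>k\<le>n. \<forall>l\<le>n. lt (f (i, k)) (f (j, l)) \<longrightarrow>
            lt (f ((i + 1) mod 3, k)) (f ((j + 1) mod 3, l))) \<and>
        (\<forall>k<n. \<exists>i<3. \<exists>j<3. \<not> lt (f (i, k)) (f (j, k + 1)))))"

text \<open>Poset isomorphic to a tower of sections, i.e. an ordinal sum of m \<ge> 1 sections:
  the carrier is split into blocks b x \<in> {0..<m}, each block (with the induced order)
  is a section, and everything in an earlier block is below everything in a later one.\<close>
definition is_tower_of_sections :: "'a set \<Rightarrow> ('a \<Rightarrow> 'a \<Rightarrow> bool) \<Rightarrow> bool" where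
  "is_tower_of_sections A lt \<longleftrightarrow> poset A lt \<and>
     (\<exists>m\<ge>1. \<exists>b :: 'a \<Rightarrow> nat. (\<forall>x\<in>A. b x < m) \<and>
        (\<forall>t<m. is_section {x \<in> A. b x = t} lt) \<and>
        (\<forall>x\<in>A. \<forall>y\<in>A. b x < b y \<longrightarrow> lt x y))"

end

theory Submission
  imports Defs
begin

text \<open>Q(j) is an antichain of Q and hence of P, so it suffices that every 3-element antichain of a
  6-stack is a rank level. In the crown P(i,i+1) each element of rank i lies below all but one
  element of rank i+1, and dually. As every level has three elements, an element of rank a and one
  of rank a+2 have a common element of rank a+1 between them, so elements whose ranks differ by at
  least 2 are comparable. The ranks of a 3-element antichain therefore lie in some {r, r+1}, and a
  crown has no 3-element antichain meeting both of its levels.\<close>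

section \<open>Ranks in finite posets\<close>

lemma sorted_wrt_irrefl_distinct:
  "sorted_wrt R xs \<Longrightarrow> \<forall>x\<in>set xs. \<not> R x x \<Longrightarrow> distinct xs"
  by (induction xs) auto

lemma sorted_wrt_below_last:
  "sorted_wrt R xs \<Longrightarrow> x \<in> set xs \<Longrightarrow> x = last xs \<or> R x (last xs)"
  by (induction xs) auto

lemma sorted_wrt_comparable:
  "sorted_wrt R xs \<Longrightarrow> x \<in> set xs \<Longrightarrow> y \<in> set xs \<Longrightarrow> x \<noteq> y \<Longrightarrow> R x y \<or> R y x"
  by (induction xs) auto

lemma poset_trans:
  "poset A lt \<Longrightarrow> x \<in> A \<Longrightarrow> y \<in> A \<Longrightarrow> z \<in> A \<Longrightarrow> lt x y \<Longrightarrow> lt y z \<Longrightarrow> lt x z"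
  unfolding poset_def by blast

lemma chain_to_distinct:
  assumes "poset A lt" "chain_to A lt cs p"
  shows "distinct cs"
  using assms sorted_wrt_irrefl_distinct[of lt cs] unfolding poset_def chain_to_def by blast

lemma length_chain_to_le_card:
  assumes "poset A lt" "chain_to A lt cs p"
  shows "length cs \<le> card A"
proof -
  have "card (set cs) \<le> card A"
    using assms unfolding poset_def chain_to_def by (simp add: card_mono)
  then show ?thesis using chain_to_distinct[OF assms] by (simp add: distinct_card)
qed

lemma chain_to_rank:
  assumes "poset A lt" "p \<in> A"
  obtains cs where "chain_to A lt cs p" "length cs = rank A lt p + 1"
proof -
  have "\<exists>cs. chain_to A lt cs p \<and> length cs = rank A lt p + 1"
    unfolding rank_def
  proof (rule GreatestI_nat[where k = 0 and b = "card A"])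
    show "\<exists>cs. chain_to A lt cs p \<and> length cs = 0 + 1"
      using assms by (intro exI[of _ "[p]"]) (auto simp: chain_to_def)
  qed (use length_chain_to_le_card[OF assms(1)] in fastforce)
  then show ?thesis using that by blast
qed

lemma length_chain_to_le_rank:
  assumes "poset A lt" "chain_to A lt cs p"
  shows "length cs \<le> rank A lt p + 1"
proof -
  have "length cs - 1 \<le> rank A lt p"
    unfolding rank_def
  proof (rule Greatest_le_nat[where b = "card A"])
    show "\<exists>cs'. chain_to A lt cs' p \<and> length cs' = length cs - 1 + 1"
      using assms(2) by (auto simp: chain_to_def)
  qed (use length_chain_to_le_card[OF assms(1)] in fastforce)
  then show ?thesis by linarith
qed

lemma rank_less:
  assumes "poset A lt" "x \<in> A" "y \<in> A" "lt x y"
  shows "rank A lt x < rank A lt y"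
proof -
  obtain cs where cs: "chain_to A lt cs x" "length cs = rank A lt x + 1"
    using chain_to_rank[OF assms(1,2)] by blast
  have "lt c y" if "c \<in> set cs" for c
  proof -
    have "c = x \<or> lt c x" using sorted_wrt_below_last[of lt cs c] cs that
      unfolding chain_to_def by auto
    moreover have "c \<in> A" using that cs unfolding chain_to_def by auto
    ultimately show "lt c y" using assms poset_trans by metis
  qed
  then have "chain_to A lt (cs @ [y]) y"
    using cs assms unfolding chain_to_def by (auto simp: sorted_wrt_append)
  from length_chain_to_le_rank[OF assms(1) this] cs show ?thesis by simp
qed

lemma rank_Suc_predecessor:
  assumes "poset A lt" "y \<in> A" "rank A lt y = Suc r"
  obtains v where "v \<in> A" "lt v y" "rank A lt v = r"
proof -
  obtain cs where cs: "chain_to A lt cs y" "length cs = r + 2"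
    using chain_to_rank[OF assms(1,2)] assms(3) by auto
  define bs where "bs = butlast cs"
  have "cs = bs @ [y]" using cs(1) append_butlast_last_id unfolding chain_to_def bs_def by metis
  moreover have "length bs = Suc r" using cs(2) unfolding bs_def by simp
  ultimately have bs: "cs = bs @ [y]" "bs \<noteq> []" by auto
  define v where "v = last bs"
  have "v \<in> set bs" using bs v_def by simp
  then have v: "v \<in> A" "lt v y"
    using cs bs unfolding chain_to_def by (auto simp: sorted_wrt_append)
  have "chain_to A lt bs v"
    using cs bs v_def unfolding chain_to_def by (auto simp: sorted_wrt_append)
  then have "r \<le> rank A lt v" using length_chain_to_le_rank[OF assms(1)] bs cs by fastforce
  moreover have "rank A lt v < Suc r" using rank_less[OF assms(1) v(1) assms(2) v(2)] assms(3) by simp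
  ultimately show ?thesis using that v by simp
qed

lemma chain_extends_to_maximal_chain:
  assumes "finite A" "is_chain A lt C"
  obtains D where "maximal_chain A lt D" "C \<subseteq> D"
proof -
  have "\<exists>D. (is_chain A lt D \<and> C \<subseteq> D) \<and>
      (\<forall>E. is_chain A lt E \<and> C \<subseteq> E \<longrightarrow> card E \<le> card D)"
  proof (rule ex_has_greatest_nat[where k = C and b = "card A + 1"])
    show "\<forall>E. is_chain A lt E \<and> C \<subseteq> E \<longrightarrow> card E < card A + 1"
      using card_mono[OF assms(1)] unfolding is_chain_def by (simp add: le_imp_less_Suc)
  qed (use assms(2) in simp)
  then obtain D where D: "is_chain A lt D" "C \<subseteq> D"
    and D_max: "\<And>E. is_chain A lt E \<Longrightarrow> C \<subseteq> E \<Longrightarrow> card E \<le> card D" by blast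
  have "maximal_chain A lt D"
    unfolding maximal_chain_def
  proof (intro conjI allI impI)
    fix E assume E: "is_chain A lt E \<and> D \<subseteq> E"
    then have "finite E" using assms(1) unfolding is_chain_def by (auto intro: finite_subset)
    moreover have "card E \<le> card D" using E D D_max[of E] by auto
    ultimately show "E = D" using card_subset_eq E by (metis card_mono le_antisym)
  qed (fact D(1))
  then show ?thesis using that D(2) by blast
qed

lemma rank_le_if_ranked_of_rank:
  assumes "poset A lt" "ranked_of_rank A lt n" "p \<in> A"
  shows "rank A lt p \<le> n"
proof -
  obtain cs where cs: "chain_to A lt cs p" "length cs = rank A lt p + 1"
    using chain_to_rank[OF assms(1,3)] by blast
  have "is_chain A lt (set cs)"
    using cs sorted_wrt_comparable[of lt cs] unfolding is_chain_def chain_to_def by blast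
  moreover have fin: "finite A" using assms(1) unfolding poset_def by simp
  ultimately obtain D where D: "maximal_chain A lt D" "set cs \<subseteq> D"
    using chain_extends_to_maximal_chain by blast
  have "card D = n + 1" using assms(2) D(1) unfolding ranked_of_rank_def by blast
  moreover have "finite D"
    using D(1) fin unfolding maximal_chain_def is_chain_def by (auto intro: finite_subset)
  then have "card (set cs) \<le> card D" using D(2) by (simp add: card_mono)
  moreover have "card (set cs) = length cs" using chain_to_distinct[OF assms(1) cs(1)] by (simp add: distinct_card)
  ultimately show ?thesis using cs by simp
qed

lemma level_antichain:
  assumes "poset A lt"
  shows "\<forall>x\<in>level A lt j. \<forall>y\<in>level A lt j. \<not> lt x y"
  using rank_less[OF assms] unfolding level_def by fastforce

section \<open>The 6-crown\<close>

text \<open>x_k = k lies below every y_l = 3 + l except y_(k+1), and y_k lies above every x_l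
  except x_(k+2) (indices mod 3).\<close>

lemma crown6_less_levels: "crown6_less a b \<Longrightarrow> a < 3 \<and> 3 \<le> b \<and> b \<le> 5"
  unfolding crown6_less_def by auto

lemma crown6_less_minus3:
  assumes "3 \<le> b" "b \<le> 5"
  shows "crown6_less (b - 3) b"
proof -
  have "b = 3 \<or> b = 4 \<or> b = 5" using assms by auto
  then show ?thesis unfolding crown6_less_def by auto
qed

lemma crown6_lower_below_upper:
  assumes "a < 3" "3 \<le> b" "b \<le> 5" "b \<noteq> 3 + (a + 1) mod 3"
  shows "crown6_less a b"
proof -
  have "a = 0 \<or> a = 1 \<or> a = 2" "b = 3 \<or> b = 4 \<or> b = 5" using assms by auto
  then show ?thesis using assms unfolding crown6_less_def by auto
qed

lemma crown6_upper_above_lower: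
  assumes "a < 3" "3 \<le> b" "b \<le> 5" "a \<noteq> (b + 2) mod 3"
  shows "crown6_less a b"
proof -
  have "a = 0 \<or> a = 1 \<or> a = 2" "b = 3 \<or> b = 4 \<or> b = 5" using assms by auto
  then show ?thesis using assms unfolding crown6_less_def by auto
qed

lemma crown6_no_antichain_across_levels:
  fixes a b c :: nat
  assumes "a < 3" "3 \<le> b" "b \<le> 5" "c \<le> 5" "a \<noteq> c" "b \<noteq> c"
    "\<not> crown6_less a b" "\<not> crown6_less b a" "\<not> crown6_less a c" "\<not> crown6_less c a"
    "\<not> crown6_less b c" "\<not> crown6_less c b"
  shows False
proof -
  have "a = 0 \<or> a = 1 \<or> a = 2" using assms by auto
  moreover have "b = 3 \<or> b = 4 \<or> b = 5" using assms by auto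
  moreover have "c = 0 \<or> c = 1 \<or> c = 2 \<or> c = 3 \<or> c = 4 \<or> c = 5" using assms by auto
  ultimately show False using assms unfolding crown6_less_def by auto
qed

section \<open>A crown between two consecutive levels\<close>

locale crown_layer =
  fixes P :: "'a set" and lt :: "'a \<Rightarrow> 'a \<Rightarrow> bool" and i :: nat and f :: "'a \<Rightarrow> nat"
  assumes poset: "poset P lt"
    and bij: "bij_betw f (levels P lt i (i + 1)) {0..5}"
    and less_iff: "\<forall>x\<in>levels P lt i (i + 1). \<forall>y\<in>levels P lt i (i + 1).
      lt x y \<longleftrightarrow> crown6_less (f x) (f y)"
begin

abbreviation layer :: "'a set" where
  "layer \<equiv> levels P lt i (i + 1)"

lemma mem_layer: "p \<in> layer \<longleftrightarrow> p \<in> P \<and> (rank P lt p = i \<or> rank P lt p = i + 1)"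
  unfolding levels_def by auto

lemma f_le_5: "p \<in> layer \<Longrightarrow> f p \<le> 5"
  using bij unfolding bij_betw_def by auto

lemma f_inj: "p \<in> layer \<Longrightarrow> q \<in> layer \<Longrightarrow> f p = f q \<Longrightarrow> p = q"
  using bij unfolding bij_betw_def inj_on_def by blast

lemma layer_element_with_value:
  assumes "m \<le> 5"
  obtains u where "u \<in> layer" "f u = m"
  using bij assms unfolding bij_betw_def by (metis atLeastAtMost_iff imageE zero_le)

lemma less_iff_crown6_less: "p \<in> layer \<Longrightarrow> q \<in> layer \<Longrightarrow> lt p q \<longleftrightarrow> crown6_less (f p) (f q)"
  using less_iff by blast

lemma rank_eq_lower_iff:
  assumes p: "p \<in> layer"
  shows "rank P lt p = i \<longleftrightarrow> f p < 3"
proof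
  assume rank_p: "rank P lt p = i"
  show "f p < 3"
  proof (rule ccontr)
    assume "\<not> f p < 3"
    have "f p - 3 \<le> 5" using f_le_5[OF p] by simp
    then obtain u where u: "u \<in> layer" "f u = f p - 3"
      using layer_element_with_value by blast
    have "lt u p"
      using less_iff_crown6_less[OF u(1) p] crown6_less_minus3 f_le_5[OF p] u(2) \<open>\<not> f p < 3\<close>
      by simp
    then have "rank P lt u < rank P lt p" using rank_less[OF poset] u(1) p mem_layer by blast
    then show False using u(1) rank_p mem_layer by auto
  qed
next
  assume "f p < 3"
  show "rank P lt p = i"
  proof (rule ccontr)
    assume "rank P lt p \<noteq> i"
    then have "p \<in> P" "rank P lt p = Suc i" using p mem_layer by auto
    then obtain v where v: "v \<in> P" "lt v p" "rank P lt v = i"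
      using rank_Suc_predecessor[OF poset] by blast
    then have "crown6_less (f v) (f p)" using less_iff_crown6_less p mem_layer by blast
    then show False using \<open>f p < 3\<close> crown6_less_levels by fastforce
  qed
qed

lemma level_lower_eq: "level P lt i = {p \<in> layer. f p < 3}"
  using rank_eq_lower_iff unfolding mem_layer level_def by auto

lemma level_upper_eq: "level P lt (i + 1) = {p \<in> layer. \<not> f p < 3}"
  using rank_eq_lower_iff unfolding mem_layer level_def by auto

lemma card_level_lower: "card (level P lt i) = 3"
proof -
  have "bij_betw f {p \<in> layer. f p < 3} {m \<in> {0..5}. m < 3}"
    by (rule bij_betw_Collect[OF bij]) simp
  moreover have "{m \<in> {0..5::nat}. m < 3} = {0, 1, 2}" by auto
  ultimately show ?thesis unfolding level_lower_eq by (simp add: bij_betw_same_card)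
qed

lemma card_level_upper: "card (level P lt (i + 1)) = 3"
proof -
  have "bij_betw f {p \<in> layer. \<not> f p < 3} {m \<in> {0..5}. \<not> m < 3}"
    by (rule bij_betw_Collect[OF bij]) simp
  moreover have "{m \<in> {0..5::nat}. \<not> m < 3} = {3, 4, 5}" by auto
  ultimately show ?thesis unfolding level_upper_eq by (simp add: bij_betw_same_card)
qed

lemma lower_below_all_upper_but_one:
  assumes x: "x \<in> level P lt i"
  obtains u where "\<forall>v\<in>level P lt (i + 1). v \<noteq> u \<longrightarrow> lt x v"
proof -
  have x': "x \<in> layer" "f x < 3" using x level_lower_eq by auto
  have "3 + (f x + 1) mod 3 \<le> 5" by simp
  then obtain u where u: "u \<in> layer" "f u = 3 + (f x + 1) mod 3"
    using layer_element_with_value by blast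
  have "lt x v" if v: "v \<in> level P lt (i + 1)" "v \<noteq> u" for v
  proof -
    have v': "v \<in> layer" "\<not> f v < 3" using v(1) level_upper_eq by auto
    have "f v \<noteq> f u" using f_inj[OF v'(1) u(1)] v(2) by blast
    then have "crown6_less (f x) (f v)"
      using crown6_lower_below_upper[OF x'(2) _ f_le_5[OF v'(1)]] v'(2) u(2) by simp
    then show ?thesis using less_iff_crown6_less[OF x'(1) v'(1)] by simp
  qed
  then show ?thesis using that by blast
qed

lemma upper_above_all_lower_but_one:
  assumes y: "y \<in> level P lt (i + 1)"
  obtains u where "\<forall>v\<in>level P lt i. v \<noteq> u \<longrightarrow> lt v y"
proof -
  have y': "y \<in> layer" "\<not> f y < 3" using y level_upper_eq by auto
  have "(f y + 2) mod 3 \<le> 5" by simp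
  then obtain u where u: "u \<in> layer" "f u = (f y + 2) mod 3"
    using layer_element_with_value by blast
  have "lt v y" if v: "v \<in> level P lt i" "v \<noteq> u" for v
  proof -
    have v': "v \<in> layer" "f v < 3" using v(1) level_lower_eq by auto
    have "f v \<noteq> f u" using f_inj[OF v'(1) u(1)] v(2) by blast
    then have "crown6_less (f v) (f y)"
      using crown6_upper_above_lower[OF v'(2) _ f_le_5[OF y'(1)]] y'(2) u(2) by simp
    then show ?thesis using less_iff_crown6_less[OF v'(1) y'(1)] by simp
  qed
  then show ?thesis using that by blast
qed

lemma no_antichain_across_levels:
  assumes x: "x \<in> level P lt i" and z: "z \<in> level P lt (i + 1)" and w: "w \<in> layer"
    and "x \<noteq> w" "z \<noteq> w"
    and "\<not> lt x z" "\<not> lt z x" "\<not> lt x w" "\<not> lt w x" "\<not> lt z w" "\<not> lt w z"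
  shows False
proof -
  have x': "x \<in> layer" "f x < 3" using x level_lower_eq by auto
  have z': "z \<in> layer" "\<not> f z < 3" using z level_upper_eq by auto
  show False
  proof (rule crown6_no_antichain_across_levels[of "f x" "f z" "f w"])
    show "f x < 3" "3 \<le> f z" using x'(2) z'(2) by auto
    show "f z \<le> 5" "f w \<le> 5" using f_le_5 z'(1) w by auto
    show "f x \<noteq> f w" using f_inj[OF x'(1) w] \<open>x \<noteq> w\<close> by blast
    show "f z \<noteq> f w" using f_inj[OF z'(1) w] \<open>z \<noteq> w\<close> by blast
  qed (use assms(6-) less_iff_crown6_less[OF x'(1) z'(1)] less_iff_crown6_less[OF z'(1) x'(1)]
      less_iff_crown6_less[OF x'(1) w] less_iff_crown6_less[OF w x'(1)]
      less_iff_crown6_less[OF z'(1) w] less_iff_crown6_less[OF w z'(1)] in simp_all)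
qed

end

section \<open>Antichains in 6-stacks\<close>

locale six_stack_of_rank =
  fixes P :: "'a set" and lt :: "'a \<Rightarrow> 'a \<Rightarrow> bool" and n :: nat
  assumes poset: "poset P lt" and rank_pos: "1 \<le> n" and ranked: "ranked_of_rank P lt n"
    and crowns: "\<forall>i<n. order_iso (levels P lt i (i + 1)) lt {0..5::nat} crown6_less"
begin

lemma crown_layer:
  assumes "i < n"
  obtains f where "crown_layer P lt i f"
  using crowns poset assms unfolding order_iso_def crown_layer_def by blast

lemma rank_le: "p \<in> P \<Longrightarrow> rank P lt p \<le> n"
  using rank_le_if_ranked_of_rank[OF poset ranked] .

lemma card_level:
  assumes "r \<le> n"
  shows "card (level P lt r) = 3"
proof (cases "r < n")
  case True
  then show ?thesis using crown_layer crown_layer.card_level_lower by metis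
next
  case False
  then have "r - 1 < n" "r = r - 1 + 1" using assms rank_pos by auto
  then show ?thesis using crown_layer crown_layer.card_level_upper by metis
qed

lemma less_if_rank_add2:
  assumes x: "x \<in> P" "rank P lt x = a" and w: "w \<in> P" "rank P lt w = a + 2"
  shows "lt x w"
proof -
  have "a < n" "a + 1 < n" using rank_le[OF w(1)] w(2) by simp_all
  obtain f where f: "crown_layer P lt a f" using crown_layer[OF \<open>a < n\<close>] by blast
  obtain g where g: "crown_layer P lt (a + 1) g" using crown_layer[OF \<open>a + 1 < n\<close>] by blast
  have "x \<in> level P lt a" "w \<in> level P lt (a + 1 + 1)" using x w unfolding level_def by auto
  obtain u where u: "\<forall>v\<in>level P lt (a + 1). v \<noteq> u \<longrightarrow> lt x v"
    using crown_layer.lower_below_all_upper_but_one[OF f \<open>x \<in> level P lt a\<close>] by blast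
  obtain d where d: "\<forall>v\<in>level P lt (a + 1). v \<noteq> d \<longrightarrow> lt v w"
    using crown_layer.upper_above_all_lower_but_one[OF g \<open>w \<in> level P lt (a + 1 + 1)\<close>] by blast
  have "\<not> level P lt (a + 1) \<subseteq> {u, d}"
  proof
    assume "level P lt (a + 1) \<subseteq> {u, d}"
    then have "card (level P lt (a + 1)) \<le> card {u, d}" by (simp add: card_mono)
    also have "\<dots> \<le> 2" by (simp add: card_insert_le_m1)
    finally show False using card_level \<open>a + 1 < n\<close> by simp
  qed
  then obtain v where v: "v \<in> level P lt (a + 1)" "v \<noteq> u" "v \<noteq> d" by blast
  then have "v \<in> P" "lt x v" "lt v w" using u d unfolding level_def by auto
  then show ?thesis using poset_trans[OF poset x(1) _ w(1)] by blast
qed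

lemma less_if_rank_gap:
  assumes x: "x \<in> P" and "w \<in> P" "rank P lt x + 2 \<le> rank P lt w"
  shows "lt x w"
proof -
  obtain k where "rank P lt w = rank P lt x + 2 + k" using assms(3) le_Suc_ex by blast
  with \<open>w \<in> P\<close> show ?thesis
  proof (induction k arbitrary: w)
    case 0
    then show ?case using less_if_rank_add2 x by simp
  next
    case (Suc k)
    obtain v where v: "v \<in> P" "lt v w" "rank P lt v = rank P lt x + 2 + k"
      using rank_Suc_predecessor[OF poset Suc.prems(1)] Suc.prems(2) by auto
    then have "lt x v" using Suc.IH by blast
    then show ?case using poset_trans[OF poset x v(1) Suc.prems(1)] v(2) by blast
  qed
qed

lemma rank_le_Suc_if_not_less:
  assumes "x \<in> P" "w \<in> P" "\<not> lt x w"
  shows "rank P lt w \<le> rank P lt x + 1"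
proof (rule ccontr)
  assume "\<not> ?thesis"
  then have "rank P lt x + 2 \<le> rank P lt w" by simp
  then show False using less_if_rank_gap assms by blast
qed

lemma antichain_card3_eq_level:
  assumes S: "S \<subseteq> P" "card S = 3" and antichain: "\<forall>x\<in>S. \<forall>y\<in>S. \<not> lt x y"
  obtains r where "S = level P lt r"
proof -
  have "finite S" "S \<noteq> {}" using S(2) by (auto intro: card_ge_0_finite)
  define r where "r = Min (rank P lt ` S)"
  have "r \<in> rank P lt ` S" unfolding r_def using \<open>finite S\<close> \<open>S \<noteq> {}\<close> by (intro Min_in) auto
  then obtain x where x: "x \<in> S" "rank P lt x = r" by (elim imageE) simp
  have incomparable: "\<not> lt p q" if "p \<in> S" "q \<in> S" for p q
    using antichain that by blast
  have rank_ge: "r \<le> rank P lt y" if "y \<in> S" for y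
    unfolding r_def using \<open>finite S\<close> that by (intro Min_le) auto
  have rank_le_Suc: "rank P lt y \<le> r + 1" if "y \<in> S" for y
    using rank_le_Suc_if_not_less[of x y] incomparable[OF x(1) that] x that S(1) by auto
  have rank_S: "rank P lt y = r" if y: "y \<in> S" for y
  proof (rule ccontr)
    assume "rank P lt y \<noteq> r"
    then have rank_y: "rank P lt y = r + 1" using rank_ge[OF y] rank_le_Suc[OF y] by simp
    have "\<not> S \<subseteq> {x, y}"
    proof
      assume "S \<subseteq> {x, y}"
      then have "card S \<le> card {x, y}" by (simp add: card_mono)
      also have "\<dots> \<le> 2" by (simp add: card_insert_le_m1)
      finally show False using S(2) by simp
    qed
    then obtain w where w: "w \<in> S" "x \<noteq> w" "y \<noteq> w" by blast
    have "r < n" using rank_le[of y] rank_y y S(1) by auto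
    then obtain f where f: "crown_layer P lt r f" using crown_layer by blast
    have "x \<in> level P lt r" "y \<in> level P lt (r + 1)" "w \<in> levels P lt r (r + 1)"
      using x y w(1) rank_y rank_ge[OF w(1)] rank_le_Suc[OF w(1)] S(1)
      unfolding level_def levels_def by auto
    then show False
      by (rule crown_layer.no_antichain_across_levels[OF f]) (use x(1) y w in \<open>auto simp: incomparable\<close>)
  qed
  have sub: "S \<subseteq> level P lt r" using rank_S S(1) unfolding level_def by auto
  have fin: "finite (level P lt r)" using poset unfolding poset_def level_def by simp
  have "card (level P lt r) = 3" using card_level[OF rank_le] x S(1) by auto
  then have "S = level P lt r" by (intro card_subset_eq[OF fin sub]) (simp add: S(2))
  then show ?thesis by (rule that)
qed

end

theorem lemma5p1:
  fixes P Q :: "'a set" and lt :: "'a \<Rightarrow> 'a \<Rightarrow> bool" and j :: nat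
  assumes "six_stack P lt"
    and "Q \<subseteq> P"
    and "is_tower_of_sections Q lt"
    and "card (level Q lt j) = 3"
  shows "\<exists>i. level Q lt j = level P lt i"
proof -
  obtain n where stack: "six_stack_of_rank P lt n"
    using assms(1) unfolding six_stack_def six_stack_of_rank_def by blast
  have "poset Q lt" using assms(3) unfolding is_tower_of_sections_def by blast
  note level_antichain[OF this]
  moreover have "level Q lt j \<subseteq> P" using assms(2) unfolding level_def by auto
  ultimately obtain i where "level Q lt j = level P lt i"
    using six_stack_of_rank.antichain_card3_eq_level[OF stack _ assms(4)] by blast
  then show ?thesis ..
qed

end
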